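(* The algorithm \textsc{Arrows} described in the context can be implemented so that its total running time over the horizon $t=1,\dots,n$ is $O(n\log n)$.
   Context: Haar transform: for $k$ a power of $2$, $H\in\mathbb{R}^{k\times k}$ is the orthonormal discrete Haar wavelet transform: $(Hv)_1=k^{-1/2}\sum_i v_i$, and for each level $l=0,\dots,\log_2k-1$ and $j=1,\dots,2^l$, splitting the block $\{(j-1)k/2^l+1,\dots,jk/2^l\}$ into first half $I^-$ and second half $I^+$, there is a coefficient $(\sum_{I^+}v_i-\sum_{I^-}v_i)/\sqrt{k/2^l}$; the level-$l$ coefficients form the block $\alpha[l]\in\mathbb{R}^{2^l}$. $pad_0(y_a,\dots,y_b)$ is $(y_a-\bar y_{a:b},\dots,y_b-\bar y_{a:b})$ ($\bar y_{a:b}$ the average) followed by zeros up to length $k$, the smallest power of $2$ $\ge b-a+1$. $T$ is coordinatewise soft thresholding at level $\sigma\sqrt{\beta\log n}$. Algorithm \textsc{Arrows} (inputs: horizon $n$, $\sigma>0$, $\delta\in(0,1]$, $\beta>24$; observations $y_1,\dots,y_n$ arrive online): set $t_h=1$, $newBin=1$, $y_0=0$. For $t=1,\dots,n$: if $newBin=1$ predict $x_t=y_{t-1}$, else $x_t=\bar y_{t_h:t-1}$; set $newBin=0$, observe $y_t$; let $\tilde y=pad_0(y_{t_h},\dots,y_t)$ with length $k$ and $\hat\alpha=T(H\tilde y)$; if $\frac{1}{\sqrt k}\sum_{l=0}^{\log_2k-1}2^{l/2}\|\hat\alpha[l]\|_1>\frac{\sigma}{\sqrt k}$ then set $newBin=1$,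 $t_h=t+1$. *)

theory Defs
  imports Complex_Main
begin

definition obs :: "real list \<Rightarrow> nat \<Rightarrow> real" where
  "obs ys t = (if t = 0 then 0 else ys ! (t - 1))"

definition avg :: "real list \<Rightarrow> nat \<Rightarrow> nat \<Rightarrow> real" where
  "avg ys a b = (\<Sum>i=a..b. obs ys i) / real (b - a + 1)"

definition nlev :: "nat \<Rightarrow> nat" where
  "nlev m = (LEAST p. m \<le> 2 ^ p)"

definition pad0 :: "real list \<Rightarrow> nat \<Rightarrow> nat \<Rightarrow> nat \<Rightarrow> real" where
  "pad0 ys a b i = (if 1 \<le> i \<and> i \<le> b - a + 1 then obs ys (a + i - 1) - avg ys a b else 0)"

definition haar_detail :: "nat \<Rightarrow> (nat \<Rightarrow> real) \<Rightarrow> nat \<Rightarrow> nat \<Rightarrow> real" where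
  "haar_detail k v l j =
     (let s = (j - 1) * (k div 2 ^ l); h = k div 2 ^ (Suc l) in
       ((\<Sum>i=s+h+1..s+2*h. v i) - (\<Sum>i=s+1..s+h. v i)) / sqrt (real k / 2 ^ l))"

definition soft_thr :: "real \<Rightarrow> real \<Rightarrow> real" where
  "soft_thr lam x = sgn x * max (\<bar>x\<bar> - lam) 0"

text \<open>The bin-closing test after observing y_b, current bin starting at a.\<close>
definition split_test :: "nat \<Rightarrow> real \<Rightarrow> real \<Rightarrow> real list \<Rightarrow> nat \<Rightarrow> nat \<Rightarrow> bool" where
  "split_test n \<sigma> \<beta> ys a b =
     (let L = nlev (b - a + 1); k = 2 ^ L; v = pad0 ys a b;
          lam = \<sigma> * sqrt (\<beta> * ln (real n)) in
      (1 / sqrt (real k)) * (\<Sum>l<L. 2 powr (real l / 2) *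
          (\<Sum>j=1..2^l. \<bar>soft_thr lam (haar_detail k v l j)\<bar>)) > \<sigma> / sqrt (real k))"

text \<open>State (t_h, newBin) after rounds 1..t.\<close>
fun arrows_state :: "nat \<Rightarrow> real \<Rightarrow> real \<Rightarrow> real list \<Rightarrow> nat \<Rightarrow> nat \<times> bool" where
  "arrows_state n \<sigma> \<beta> ys 0 = (1, True)"
| "arrows_state n \<sigma> \<beta> ys (Suc t) =
     (let th = fst (arrows_state n \<sigma> \<beta> ys t) in
      if split_test n \<sigma> \<beta> ys th (Suc t) then (Suc t + 1, True) else (th, False))"

definition arrows_pred :: "nat \<Rightarrow> real \<Rightarrow> real \<Rightarrow> real list \<Rightarrow> nat \<Rightarrow> real" where
  "arrows_pred n \<sigma> \<beta> ys t =
     (let (th, nb) = arrows_state n \<sigma> \<beta> ys (t - 1) in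
      if nb then obs ys (t - 1) else avg ys th (t - 1))"

section \<open>A unit-cost RAM model with online input/output\<close>

text \<open>Integer (nat) memory and real memory, both indirectly addressed by naturals.
  Reals can be built from nats but not converted back (no floor).\<close>

datatype nexp = NC nat | NLd nexp | NPlus nexp nexp | NMinus nexp nexp | NTimes nexp nexp
  | NDiv nexp nexp | NMod nexp nexp

datatype rexp = RC real | RLd nexp | ROfNat nexp | RPlus rexp rexp | RMinus rexp rexp
  | RTimes rexp rexp | RDivide rexp rexp | RSqrt rexp | RLn rexp | RAbs rexp

datatype bexp = BNLess nexp nexp | BRLess rexp rexp | BNot bexp | BAnd bexp bexp

datatype com = Skip | NStore nexp nexp | RStore nexp rexp | Seq com com | If bexp com com
  | While bexp com | Read nexp | Write rexp

datatype event = ReadEv | OutEv real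

record state =
  nmem :: "nat \<Rightarrow> nat"
  rmem :: "nat \<Rightarrow> real"
  inp :: "real list"
  trace :: "event list"

fun nval :: "nexp \<Rightarrow> state \<Rightarrow> nat" where
  "nval (NC c) s = c"
| "nval (NLd a) s = nmem s (nval a s)"
| "nval (NPlus a b) s = nval a s + nval b s"
| "nval (NMinus a b) s = nval a s - nval b s"
| "nval (NTimes a b) s = nval a s * nval b s"
| "nval (NDiv a b) s = nval a s div nval b s"
| "nval (NMod a b) s = nval a s mod nval b s"

fun rval :: "rexp \<Rightarrow> state \<Rightarrow> real" where
  "rval (RC c) s = c"
| "rval (RLd a) s = rmem s (nval a s)"
| "rval (ROfNat a) s = real (nval a s)"
| "rval (RPlus a b) s = rval a s + rval b s"
| "rval (RMinus a b) s = rval a s - rval b s"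
| "rval (RTimes a b) s = rval a s * rval b s"
| "rval (RDivide a b) s = rval a s / rval b s"
| "rval (RSqrt a) s = sqrt (rval a s)"
| "rval (RLn a) s = ln (rval a s)"
| "rval (RAbs a) s = \<bar>rval a s\<bar>"

fun bval :: "bexp \<Rightarrow> state \<Rightarrow> bool" where
  "bval (BNLess a b) s = (nval a s < nval b s)"
| "bval (BRLess a b) s = (rval a s < rval b s)"
| "bval (BNot b) s = (\<not> bval b s)"
| "bval (BAnd a b) s = (bval a s \<and> bval b s)"

fun ncost :: "nexp \<Rightarrow> nat" where
  "ncost (NC c) = 1"
| "ncost (NLd a) = 1 + ncost a"
| "ncost (NPlus a b) = 1 + ncost a + ncost b"
| "ncost (NMinus a b) = 1 + ncost a + ncost b"
| "ncost (NTimes a b) = 1 + ncost a + ncost b"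
| "ncost (NDiv a b) = 1 + ncost a + ncost b"
| "ncost (NMod a b) = 1 + ncost a + ncost b"

fun rcost :: "rexp \<Rightarrow> nat" where
  "rcost (RC c) = 1"
| "rcost (RLd a) = 1 + ncost a"
| "rcost (ROfNat a) = 1 + ncost a"
| "rcost (RPlus a b) = 1 + rcost a + rcost b"
| "rcost (RMinus a b) = 1 + rcost a + rcost b"
| "rcost (RTimes a b) = 1 + rcost a + rcost b"
| "rcost (RDivide a b) = 1 + rcost a + rcost b"
| "rcost (RSqrt a) = 1 + rcost a"
| "rcost (RLn a) = 1 + rcost a"
| "rcost (RAbs a) = 1 + rcost a"

fun bcost :: "bexp \<Rightarrow> nat" where
  "bcost (BNLess a b) = 1 + ncost a + ncost b"
| "bcost (BRLess a b) = 1 + rcost a + rcost b"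
| "bcost (BNot b) = 1 + bcost b"
| "bcost (BAnd a b) = 1 + bcost a + bcost b"

text \<open>Big-step semantics with running time: big_step (c, s) t s' means c started in s
  terminates in s' after t time units. Read consumes the next observation (stuck if none
  remain) and stores it; Write outputs a prediction.\<close>

inductive big_step :: "com \<times> state \<Rightarrow> nat \<Rightarrow> state \<Rightarrow> bool" where
  SkipB: "big_step (Skip, s) 1 s"
| NStoreB: "big_step (NStore a e, s) (1 + ncost a + ncost e)
             (s\<lparr>nmem := (nmem s)(nval a s := nval e s)\<rparr>)"
| RStoreB: "big_step (RStore a e, s) (1 + ncost a + rcost e)
             (s\<lparr>rmem := (rmem s)(nval a s := rval e s)\<rparr>)"
| SeqB: "big_step (c1, s1) t1 s2 \<Longrightarrow> big_step (c2, s2) t2 s3 \<Longrightarrow>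
          big_step (Seq c1 c2, s1) (t1 + t2) s3"
| IfTrueB: "bval b s \<Longrightarrow> big_step (c1, s) t s' \<Longrightarrow>
          big_step (If b c1 c2, s) (1 + bcost b + t) s'"
| IfFalseB: "\<not> bval b s \<Longrightarrow> big_step (c2, s) t s' \<Longrightarrow>
          big_step (If b c1 c2, s) (1 + bcost b + t) s'"
| WhileFalseB: "\<not> bval b s \<Longrightarrow> big_step (While b c, s) (1 + bcost b) s"
| WhileTrueB: "bval b s1 \<Longrightarrow> big_step (c, s1) t1 s2 \<Longrightarrow> big_step (While b c, s2) t2 s3 \<Longrightarrow>
          big_step (While b c, s1) (1 + bcost b + t1 + t2) s3"
| ReadB: "inp s = y # ys \<Longrightarrow>
          big_step (Read a, s) (1 + ncost a)
            (s\<lparr>rmem := (rmem s)(nval a s := y), inp := ys, trace := trace s @ [ReadEv]\<rparr>)"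
| WriteB: "big_step (Write e, s) (1 + rcost e) (s\<lparr>trace := trace s @ [OutEv (rval e s)]\<rparr>)"

definition init_state :: "nat \<Rightarrow> real \<Rightarrow> real \<Rightarrow> real \<Rightarrow> real list \<Rightarrow> state" where
  "init_state n \<sigma> \<delta> \<beta> ys =
     \<lparr>nmem = (\<lambda>_. 0)(0 := n), rmem = (\<lambda>_. 0)(0 := \<sigma>, 1 := \<delta>, 2 := \<beta>),
      inp = ys, trace = []\<rparr>"

definition arrows_trace :: "nat \<Rightarrow> real \<Rightarrow> real \<Rightarrow> real list \<Rightarrow> event list" where
  "arrows_trace n \<sigma> \<beta> ys = concat (map (\<lambda>t. [OutEv (arrows_pred n \<sigma> \<beta> ys t), ReadEv]) [1..<n+1])"

end

theory Submission
  imports Defs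
begin

text \<open>Every summand of the test statistic of split_test is a thresholded Haar coefficient of the
  padded, centered bin, i.e. the difference of the bin sums over the two halves of a dyadic
  block: a second difference of prefix sums. Centering does not change the coefficient of a
  block that lies inside the bin, and blocks after the end of the bin vanish. So the statistic
  is the sum of the terms of the blocks inside the bin, which never change once the block is
  complete and can be accumulated while the bin grows (a new block completes at level q iff 2^q
  divides the bin length), plus at most one block per level straddling the end of the bin, which
  is recomputed from stored prefix sums. A round therefore costs O(log n) unit-cost operations,
  and all n rounds O(n log n).\<close>

section \<open>Dyadic levels\<close>

lemma le_two_power_nlev: "m \<le> 2 ^ nlev m"
  unfolding nlev_def by (rule LeastI[of _ m]) (simp add: less_exp less_imp_le)

lemma nlev_le_iff: "nlev m \<le> p \<longleftrightarrow> m \<le> 2 ^ p"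
proof
  assume "nlev m \<le> p"
  then show "m \<le> 2 ^ p"
    using le_two_power_nlev[of m] by (meson le_trans one_le_numeral power_increasing)
qed (simp add: nlev_def Least_le)

lemma nlev_le_self: "nlev m \<le> m"
  by (simp add: nlev_le_iff less_exp less_imp_le)

lemma nlev_mono: "m \<le> n \<Longrightarrow> nlev m \<le> nlev n"
  using le_two_power_nlev[of n] by (simp add: nlev_le_iff)

lemma two_power_less_double_iff: "1 \<le> q \<Longrightarrow> 2^q < 2 * m \<longleftrightarrow> q \<le> nlev m"
proof -
  assume "1 \<le> q"
  then have "(2::nat)^q = 2 * 2^(q - 1)"
    by (simp flip: power_Suc)
  then have "2^q < 2 * m \<longleftrightarrow> \<not> nlev m \<le> q - 1"
    by (simp add: nlev_le_iff not_le)
  then show ?thesis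
    using \<open>1 \<le> q\<close> by linarith
qed

lemma dvd_levels_upto_nlev:
  assumes "0 < m"
  shows "{q\<in>{1..m}. 2^q dvd m} = {q\<in>{1..<nlev m + 1}. 2^q dvd m}"
proof -
  have lev: "q \<le> nlev m" if "2^q dvd m" for q
  proof -
    have "2^q \<le> m"
      using dvd_imp_le[OF that assms] .
    then have "(2::nat)^q \<le> 2^nlev m"
      using le_two_power_nlev[of m] by linarith
    then show ?thesis
      by simp
  qed
  then show ?thesis
    using nlev_le_self[of m] by (auto simp: less_Suc_eq_le dest: lev)
qed

lemma nlev_le_log: "1 \<le> n \<Longrightarrow> real (nlev n) \<le> 1 + log 2 n"
proof (cases "nlev n")
  case (Suc k)
  then have "2^k < n"
    using nlev_le_iff[of n k] by simp
  then have "real k < log 2 n"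
    by (rule less_log2_of_power)
  then show ?thesis
    using Suc by simp
qed simp

lemma n_nlev_le_n_ln:
  assumes "2 \<le> n"
  shows "real (A + (B + D * nlev n) * n) \<le> real (A + B + 2 * D) / ln 2 * n * ln n"
proof -
  define \<rho> where "\<rho> = log 2 n"
  have \<rho>: "1 \<le> \<rho>" "real (nlev n) \<le> 1 + \<rho>"
    unfolding \<rho>_def using assms nlev_le_log[of n] by simp_all
  have n: "1 \<le> real n"
    using assms by simp
  have "real (A + (B + D * nlev n) * n) = real A + real B * n + real D * (real (nlev n) * n)"
    by (simp add: algebra_simps)
  also have "\<dots> \<le> A * (\<rho> * n) + B * (\<rho> * n) + D * (2 * \<rho> * n)"
  proof (intro add_mono)
    have "1 * 1 \<le> \<rho> * n"
      using \<rho>(1) n by (intro mult_mono) auto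
    then show "real A \<le> A * (\<rho> * n)"
      using mult_left_mono[of 1 "\<rho> * n" "real A"] by simp
    have "1 * real n \<le> \<rho> * n"
      using \<rho>(1) by (intro mult_right_mono) auto
    then show "real B * n \<le> B * (\<rho> * n)"
      using mult_left_mono[of n "\<rho> * n" "real B"] by simp
    have "real (nlev n) * n \<le> 2 * \<rho> * n"
      using \<rho> n by (intro mult_right_mono) auto
    then show "real D * (real (nlev n) * n) \<le> D * (2 * \<rho> * n)"
      by (simp add: mult_left_mono)
  qed
  also have "\<dots> = real (A + B + 2 * D) / ln 2 * n * ln n"
    unfolding \<rho>_def log_def by (simp add: field_simps)
  finally show ?thesis .
qed

lemma sum_filter_atLeastLessThan_Suc:
  "k \<le> q \<Longrightarrow>
     (\<Sum>x\<in>{x\<in>{k..<Suc q}. P x}. g x) = (\<Sum>x\<in>{x\<in>{k..<q}. P x}. g x) + (if P q then g q else 0)"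
proof -
  assume "k \<le> q"
  have "(\<Sum>x\<in>{x\<in>{k..<Suc q}. P x}. g x) = (\<Sum>x=k..<Suc q. if P x then g x else 0)"
    by (rule sum.inter_filter) simp
  also have "\<dots> = (\<Sum>x=k..<q. if P x then g x else 0) + (if P q then g q else 0)"
    using \<open>k \<le> q\<close> by simp
  also have "(\<Sum>x=k..<q. if P x then g x else 0) = (\<Sum>x\<in>{x\<in>{k..<q}. P x}. g x)"
    by (rule sum.inter_filter[symmetric]) simp
  finally show ?thesis .
qed

lemma sum_lessThan_eq_sum_atMost:
  fixes c N :: nat
  assumes "\<And>j. c < j \<or> N \<le> j \<Longrightarrow> f j = 0"
  shows "sum f {..<N} = sum f {..c}"
proof -
  have "sum f {..<N} = sum f ({..<N} \<inter> {..c})"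
    by (intro sum.mono_neutral_right) (auto intro!: assms)
  also have "\<dots> = sum f {..c}"
    by (intro sum.mono_neutral_left) (auto intro!: assms)
  finally show ?thesis .
qed

section \<open>The test statistic in terms of prefix sums\<close>

definition psum :: "real list \<Rightarrow> nat \<Rightarrow> nat \<Rightarrow> real" where
  "psum ys a i = (\<Sum>j<i. obs ys (a + j))"

definition centered_psum :: "real list \<Rightarrow> nat \<Rightarrow> nat \<Rightarrow> nat \<Rightarrow> real" where
  "centered_psum ys a m x = (if x \<le> m then psum ys a x - psum ys a m / m * x else 0)"

text \<open>If F x is the sum of v over (0, x], then block_diff F s p is the sum of v over the
  second half of the block (s, s + p] minus its sum over the first half.\<close>

definition block_diff :: "(nat \<Rightarrow> real) \<Rightarrow> nat \<Rightarrow> nat \<Rightarrow> real" where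
  "block_diff F s p = F (s + p) - 2 * F (s + p div 2) + F s"

text \<open>The summand of split_test belonging to the Haar coefficient D / sqrt p of a block of
  length p = k / 2^l: the factors 1 / sqrt k and 2^(l/2) combine to 1 / sqrt p.\<close>

definition thr_term :: "real \<Rightarrow> real \<Rightarrow> real \<Rightarrow> real" where
  "thr_term lam p D = max (\<bar>D\<bar> / sqrt p - lam) 0 / sqrt p"

definition full_terms :: "real \<Rightarrow> real list \<Rightarrow> nat \<Rightarrow> nat \<Rightarrow> real" where
  "full_terms lam ys a m =
     (\<Sum>q=1..m. \<Sum>j<m div 2^q. thr_term lam (2^q) (block_diff (psum ys a) (j * 2^q) (2^q)))"

definition boundary_term :: "real \<Rightarrow> real list \<Rightarrow> nat \<Rightarrow> nat \<Rightarrow> nat \<Rightarrow> real" where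
  "boundary_term lam ys a m q =
     thr_term lam (2^q) (block_diff (centered_psum ys a m) (m div 2^q * 2^q) (2^q))"

lemma psum_0 [simp]: "psum ys a 0 = 0"
  by (simp add: psum_def)

lemma psum_Suc: "psum ys a (Suc i) = psum ys a i + obs ys (a + i)"
  by (simp add: psum_def)

lemma avg_eq_psum: "a \<le> b \<Longrightarrow> avg ys a b = psum ys a (b - a + 1) / (b - a + 1)"
  unfolding avg_def psum_def
  by (simp add: sum.atLeastAtMost_shift_0 atLeast0AtMost lessThan_Suc_atMost Suc_diff_le)

lemma centered_psum_beyond: "m \<le> x \<Longrightarrow> centered_psum ys a m x = 0"
  by (cases "m = 0") (auto simp: centered_psum_def psum_def)

lemma centered_psum_Suc:
  "Suc x \<le> m \<Longrightarrow>
     centered_psum ys a m (Suc x) = centered_psum ys a m x + obs ys (a + x) - psum ys a m / m"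
  by (simp add: centered_psum_def psum_Suc add_divide_distrib algebra_simps)

lemma sum_pad0_eq_centered_psum:
  assumes "a \<le> b"
  shows "(\<Sum>i=1..x. pad0 ys a b i) = centered_psum ys a (b - a + 1) x"
proof (induction x)
  case 0
  show ?case by (simp add: centered_psum_def psum_def)
next
  case (Suc x)
  show ?case
  proof (cases "Suc x \<le> b - a + 1")
    case True
    have "pad0 ys a b (Suc x) = obs ys (a + x) - psum ys a (b - a + 1) / (b - a + 1)"
      using True assms by (simp add: pad0_def avg_eq_psum)
    then show ?thesis
      using Suc.IH centered_psum_Suc[OF True] by simp
  next
    case False
    then show ?thesis using Suc.IH centered_psum_beyond[of "b - a + 1" x ys a]
      by (simp add: pad0_def centered_psum_beyond)
  qed
qed

lemma block_diff_cong:
  "(\<And>x. x \<le> s + p \<Longrightarrow> F x = G x) \<Longrightarrow> block_diff F s p = block_diff G s p"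
  by (simp add: block_diff_def)

lemma block_diff_centered_psum_inside:
  assumes "even p" "s + p \<le> m"
  shows "block_diff (centered_psum ys a m) s p = block_diff (psum ys a) s p"
proof -
  define \<mu> where "\<mu> = psum ys a m / m"
  have c: "centered_psum ys a m x = psum ys a x - \<mu> * x" if "x \<le> s + p" for x
    using that assms(2) by (simp add: centered_psum_def \<mu>_def)
  have "block_diff (centered_psum ys a m) s p
      = block_diff (psum ys a) s p - \<mu> * (real (s + p) - 2 * real (s + p div 2) + real s)"
    using c[of s] c[of "s + p div 2"] c[of "s + p"] by (simp add: block_diff_def algebra_simps)
  moreover have "real (s + p) - 2 * real (s + p div 2) + real s = 0"
    using \<open>even p\<close> by (auto elim!: evenE)
  ultimately show ?thesis by simp
qed

lemma block_diff_centered_psum_beyond: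
  "m \<le> s \<Longrightarrow> block_diff (centered_psum ys a m) s p = 0"
  by (simp add: block_diff_def centered_psum_beyond)

lemma thr_term_0 [simp]: "0 \<le> lam \<Longrightarrow> thr_term lam p 0 = 0"
  by (simp add: thr_term_def)

lemma haar_detail_eq_block_diff:
  assumes "l < L"
  shows "haar_detail (2^L) v l j
     = block_diff (\<lambda>x. \<Sum>i=1..x. v i) ((j - 1) * 2^(L-l)) (2^(L-l)) / sqrt (2^(L-l))"
proof -
  define s where "s = (j - 1) * 2^(L-l)"
  define h where "h = (2::nat)^(L - Suc l)"
  have p: "2^(L-l) = 2 * h"
    using assms unfolding h_def by (simp flip: power_Suc add: Suc_diff_Suc)
  have "(2::nat)^L div 2^l = 2^(L-l)" "(2::nat)^L div 2^Suc l = h" "real (2^L) / 2^l = (2::real)^(L-l)"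
    using assms unfolding h_def by (simp_all only: power_diff Suc_leI less_imp_le) simp_all
  then have "haar_detail (2^L) v l j
      = ((\<Sum>i=s+h+1..s+2*h. v i) - (\<Sum>i=s+1..s+h. v i)) / sqrt (2^(L-l))"
    unfolding haar_detail_def Let_def s_def by simp
  also have "(\<Sum>i=s+h+1..s+2*h. v i) = (\<Sum>i=1..s+2*h. v i) - (\<Sum>i=1..s+h. v i)"
    using sum.ub_add_nat[of 1 "s+h" v h] by (simp add: mult_2 add.assoc)
  also have "(\<Sum>i=s+1..s+h. v i) = (\<Sum>i=1..s+h. v i) - (\<Sum>i=1..s. v i)"
    using sum.ub_add_nat[of 1 s v h] by simp
  finally have "haar_detail (2^L) v l j
      = ((\<Sum>i=1..s+2*h. v i) - 2 * (\<Sum>i=1..s+h. v i) + (\<Sum>i=1..s. v i)) / sqrt (2^(L-l))"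
    by simp
  moreover have "block_diff (\<lambda>x. \<Sum>i=1..x. v i) s (2^(L-l))
      = (\<Sum>i=1..s+2*h. v i) - 2 * (\<Sum>i=1..s+h. v i) + (\<Sum>i=1..s. v i)"
    unfolding block_diff_def p by simp
  ultimately show ?thesis
    unfolding s_def by simp
qed

lemma abs_soft_thr: "0 \<le> lam \<Longrightarrow> \<bar>soft_thr lam x\<bar> = max (\<bar>x\<bar> - lam) 0"
  by (auto simp: soft_thr_def sgn_if abs_mult max_def)

lemma haar_summand_eq_thr_term:
  assumes "l < L" "0 \<le> lam"
  shows "1 / sqrt (2^L) * (2 powr (real l / 2) * \<bar>soft_thr lam (D / sqrt (2^(L-l)))\<bar>)
     = thr_term lam (2^(L-l)) D"
proof -
  have "(2::real) powr (real l / 2) = sqrt (2^l)"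
    by (simp add: powr_half_sqrt_powr powr_realpow)
  moreover have "sqrt ((2::real)^L) = sqrt (2^l) * sqrt (2^(L-l))"
    using assms(1) by (simp flip: real_sqrt_mult power_add)
  ultimately show ?thesis
    using assms(2) by (simp add: thr_term_def abs_soft_thr abs_div)
qed

lemma haar_statistic_eq_block_sum:
  assumes "0 \<le> lam"
  shows "1 / sqrt (real (2^L))
       * (\<Sum>l<L. 2 powr (real l / 2) * (\<Sum>j=1..2^l. \<bar>soft_thr lam (haar_detail (2^L) v l j)\<bar>))
     = (\<Sum>q=1..L. \<Sum>j<2^(L-q). thr_term lam (2^q) (block_diff (\<lambda>x. \<Sum>i=1..x. v i) (j * 2^q) (2^q)))"
proof -
  define W where "W = (\<lambda>x. \<Sum>i=1..x. v i)"
  define g where "g q = (\<Sum>j<2^(L-q). thr_term lam (2^q) (block_diff W (j * 2^q) (2^q)))" for q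
  have "1 / sqrt (real (2^L))
       * (\<Sum>l<L. 2 powr (real l / 2) * (\<Sum>j=1..2^l. \<bar>soft_thr lam (haar_detail (2^L) v l j)\<bar>))
     = (\<Sum>l<L. \<Sum>j=1..2^l. 1 / sqrt (2^L)
         * (2 powr (real l / 2) * \<bar>soft_thr lam (haar_detail (2^L) v l j)\<bar>))"
    by (simp add: sum_distrib_left)
  also have "\<dots> = (\<Sum>l<L. g (L - l))"
  proof (rule sum.cong[OF refl])
    fix l assume "l \<in> {..<L}"
    then have l: "l < L" "L - (L - l) = l" by auto
    have "(\<Sum>j=1..2^l. 1 / sqrt (2^L) * (2 powr (real l / 2) * \<bar>soft_thr lam (haar_detail (2^L) v l j)\<bar>))
        = (\<Sum>j=1..2^l. thr_term lam (2^(L-l)) (block_diff W ((j - 1) * 2^(L-l)) (2^(L-l))))"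
      by (intro sum.cong refl)
        (simp only: haar_detail_eq_block_diff[OF l(1)] haar_summand_eq_thr_term[OF l(1) assms] W_def)
    also have "\<dots> = g (L - l)"
      unfolding g_def l(2) by (simp add: sum.atLeast1_atMost_eq)
    finally show "(\<Sum>j=1..2^l. 1 / sqrt (2^L)
        * (2 powr (real l / 2) * \<bar>soft_thr lam (haar_detail (2^L) v l j)\<bar>)) = g (L - l)" .
  qed
  also have "\<dots> = (\<Sum>q=1..L. g q)"
    by (rule sum.reindex_bij_witness[of _ "\<lambda>q. L - q" "\<lambda>l. L - l"]) auto
  finally show ?thesis
    unfolding g_def W_def .
qed

lemma level_sum_centered_psum:
  assumes "m \<le> 2^L" "1 \<le> q" "q \<le> L" "0 \<le> lam"
  shows "(\<Sum>j<2^(L-q). thr_term lam (2^q) (block_diff (centered_psum ys a m) (j * 2^q) (2^q)))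
     = (\<Sum>j<m div 2^q. thr_term lam (2^q) (block_diff (psum ys a) (j * 2^q) (2^q)))
       + boundary_term lam ys a m q"
proof -
  define p :: nat where "p = 2^q"
  define c where "c = m div p"
  define f where "f j = thr_term lam (2^q) (block_diff (centered_psum ys a m) (j * p) p)" for j
  have p: "0 < p" "even p"
    using assms(2) unfolding p_def by auto
  have cp: "c * p \<le> m" "m < Suc c * p"
    unfolding c_def mult_Suc using div_mult_mod_eq[of m p] mod_less_divisor[OF p(1), of m] by linarith+
  have "m \<le> 2^(L-q) * p"
    using assms(1,3) unfolding p_def by (simp flip: power_add)
  then have zero: "f j = 0" if "c < j \<or> 2^(L-q) \<le> j" for j
  proof -
    from that have "Suc c * p \<le> j * p \<or> 2^(L-q) * p \<le> j * p"
      by (metis Suc_leI mult_le_mono1)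
    then have "m \<le> j * p"
      using cp(2) \<open>m \<le> 2^(L-q) * p\<close> by linarith
    then show ?thesis
      using assms(4) unfolding f_def by (simp add: block_diff_centered_psum_beyond)
  qed
  have "sum f {..<2^(L-q)} = sum f {..c}"
    using zero by (rule sum_lessThan_eq_sum_atMost)
  also have "\<dots> = sum f {..<c} + f c"
    by (simp add: lessThan_Suc_atMost[symmetric])
  also have "sum f {..<c} = (\<Sum>j<c. thr_term lam (2^q) (block_diff (psum ys a) (j * p) p))"
  proof (rule sum.cong[OF refl])
    fix j assume "j \<in> {..<c}"
    then have "Suc j * p \<le> c * p"
      by (intro mult_le_mono1) simp
    then have "j * p + p \<le> m"
      using cp(1) by simp
    then show "f j = thr_term lam (2^q) (block_diff (psum ys a) (j * p) p)"
      unfolding f_def using p(2) by (simp add: block_diff_centered_psum_inside)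
  qed
  finally show ?thesis
    unfolding f_def c_def p_def boundary_term_def by simp
qed

lemma full_terms_upto_nlev:
  "full_terms lam ys a m
     = (\<Sum>q=1..nlev m. \<Sum>j<m div 2^q. thr_term lam (2^q) (block_diff (psum ys a) (j * 2^q) (2^q)))"
  unfolding full_terms_def
proof (rule sum.mono_neutral_right)
  show "\<forall>q\<in>{1..m} - {1..nlev m}.
      (\<Sum>j<m div 2^q. thr_term lam (2^q) (block_diff (psum ys a) (j * 2^q) (2^q))) = 0"
  proof
    fix q assume "q \<in> {1..m} - {1..nlev m}"
    then have "(2::nat) ^ nlev m < 2 ^ q" by auto
    then have "m < 2^q"
      using le_two_power_nlev[of m] by linarith
    then have "m div 2^q = 0"
      by simp
    then show "(\<Sum>j<m div 2^q. thr_term lam (2^q) (block_diff (psum ys a) (j * 2^q) (2^q))) = 0"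
      by simp
  qed
qed (auto simp: nlev_le_self intro: order.trans)

lemma split_test_iff:
  assumes "a \<le> b" and lam: "lam = \<sigma> * sqrt (\<beta> * ln (real n))" "0 \<le> lam"
  shows "split_test n \<sigma> \<beta> ys a b \<longleftrightarrow>
     \<sigma> / sqrt (2 ^ nlev (b - a + 1))
       < full_terms lam ys a (b - a + 1) + (\<Sum>q=1..nlev (b - a + 1). boundary_term lam ys a (b - a + 1) q)"
proof -
  define m where "m = b - a + 1"
  define L where "L = nlev m"
  have "(\<lambda>x. \<Sum>i=1..x. pad0 ys a b i) = centered_psum ys a m"
    using sum_pad0_eq_centered_psum[OF assms(1)] unfolding m_def by blast
  then have "1 / sqrt (real (2^L)) * (\<Sum>l<L. 2 powr (real l / 2)
         * (\<Sum>j=1..2^l. \<bar>soft_thr lam (haar_detail (2^L) (pad0 ys a b) l j)\<bar>))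
      = (\<Sum>q=1..L. \<Sum>j<2^(L-q). thr_term lam (2^q) (block_diff (centered_psum ys a m) (j * 2^q) (2^q)))"
    using haar_statistic_eq_block_sum[OF lam(2), of L "pad0 ys a b"] by simp
  also have "\<dots> = (\<Sum>q=1..L. (\<Sum>j<m div 2^q. thr_term lam (2^q) (block_diff (psum ys a) (j * 2^q) (2^q)))
      + boundary_term lam ys a m q)"
    using le_two_power_nlev[of m] lam(2) unfolding L_def by (intro sum.cong refl level_sum_centered_psum) auto
  also have "\<dots> = full_terms lam ys a m + (\<Sum>q=1..L. boundary_term lam ys a m q)"
    unfolding full_terms_upto_nlev L_def by (simp add: sum.distrib)
  finally show ?thesis
    unfolding split_test_def Let_def lam(1)[symmetric] m_def[symmetric] L_def[symmetric] by simp
qed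

lemma full_terms_0 [simp]: "full_terms lam ys a 0 = 0"
  by (simp add: full_terms_def)

lemma full_terms_Suc:
  "full_terms lam ys a (Suc m) = full_terms lam ys a m
     + (\<Sum>q\<in>{q\<in>{1..Suc m}. 2^q dvd Suc m}.
          thr_term lam (2^q) (block_diff (psum ys a) (Suc m - 2^q) (2^q)))"
proof -
  define g where "g q j = thr_term lam (2^q) (block_diff (psum ys a) (j * 2^q) (2^q))" for q j
  have ft: "full_terms lam ys a k = (\<Sum>q=1..k. \<Sum>j<k div 2^q. g q j)" for k
    by (simp add: full_terms_def g_def)
  have "m < 2 * 2 ^ m"
    using less_exp[of m] by linarith
  then have old: "full_terms lam ys a m = (\<Sum>q=1..Suc m. \<Sum>j<m div 2^q. g q j)"
    by (simp add: ft)
  have "full_terms lam ys a (Suc m)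
      = (\<Sum>q=1..Suc m. (\<Sum>j<m div 2^q. g q j) + (if 2^q dvd Suc m then g q (m div 2^q) else 0))"
    unfolding ft by (intro sum.cong refl) (simp add: div_Suc dvd_eq_mod_eq_0)
  also have "\<dots> = full_terms lam ys a m + (\<Sum>q\<in>{q\<in>{1..Suc m}. 2^q dvd Suc m}. g q (m div 2^q))"
    by (simp only: old sum.distrib sum.inter_filter[OF finite_atLeastAtMost])
  also have "(\<Sum>q\<in>{q\<in>{1..Suc m}. 2^q dvd Suc m}. g q (m div 2^q))
      = (\<Sum>q\<in>{q\<in>{1..Suc m}. 2^q dvd Suc m}.
          thr_term lam (2^q) (block_diff (psum ys a) (Suc m - 2^q) (2^q)))"
  proof (intro sum.cong refl)
    fix q assume "q \<in> {q\<in>{1..Suc m}. 2^q dvd Suc m}"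
    then obtain c where c: "Suc m = 2^q * c" by auto
    have "Suc m div 2^q = Suc (m div 2^q)"
      using c div_Suc[of m "2^q"] by simp
    then have "Suc (m div 2^q) * 2^q = Suc m"
      using c by simp
    then have "m div 2^q * 2^q = Suc m - 2^q"
      by simp
    then show "g q (m div 2^q) = thr_term lam (2^q) (block_diff (psum ys a) (Suc m - 2^q) (2^q))"
      by (simp add: g_def)
  qed
  finally show ?thesis .
qed

lemma full_terms_Suc_upto_nlev:
  "full_terms lam ys a (Suc m) = full_terms lam ys a m
     + (\<Sum>q\<in>{q\<in>{1..<nlev (Suc m) + 1}. 2^q dvd Suc m}.
          thr_term lam (2^q) (block_diff (psum ys a) (Suc m - 2^q) (2^q)))"
  unfolding full_terms_Suc dvd_levels_upto_nlev[OF zero_less_Suc] ..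

section \<open>Execution with cost bounds\<close>

definition runs_to :: "com \<Rightarrow> state \<Rightarrow> (nat \<Rightarrow> state \<Rightarrow> bool) \<Rightarrow> bool" where
  "runs_to c s Q \<longleftrightarrow> (\<exists>t s'. big_step (c, s) t s' \<and> Q t s')"

lemma runs_to_mono: "runs_to c s Q \<Longrightarrow> (\<And>t s'. Q t s' \<Longrightarrow> R t s') \<Longrightarrow> runs_to c s R"
  unfolding runs_to_def by blast

lemma runs_to_Skip: "Q 1 s \<Longrightarrow> runs_to Skip s Q"
  unfolding runs_to_def using SkipB by blast

lemma runs_to_NStore:
  "Q (1 + ncost a + ncost e) (s\<lparr>nmem := (nmem s)(nval a s := nval e s)\<rparr>) \<Longrightarrow> runs_to (NStore a e) s Q"
  unfolding runs_to_def using NStoreB by blast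

lemma runs_to_RStore:
  "Q (1 + ncost a + rcost e) (s\<lparr>rmem := (rmem s)(nval a s := rval e s)\<rparr>) \<Longrightarrow> runs_to (RStore a e) s Q"
  unfolding runs_to_def using RStoreB by blast

lemma runs_to_Seq:
  "runs_to c1 s (\<lambda>t1 s1. runs_to c2 s1 (\<lambda>t2 s2. Q (t1 + t2) s2)) \<Longrightarrow> runs_to (Seq c1 c2) s Q"
  unfolding runs_to_def using SeqB by blast

lemma runs_to_If:
  "(bval b s \<Longrightarrow> runs_to c1 s (\<lambda>t. Q (1 + bcost b + t))) \<Longrightarrow>
   (\<not> bval b s \<Longrightarrow> runs_to c2 s (\<lambda>t. Q (1 + bcost b + t))) \<Longrightarrow> runs_to (If b c1 c2) s Q"
  unfolding runs_to_def using IfTrueB IfFalseB by blast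

lemma runs_to_Read:
  "inp s \<noteq> [] \<Longrightarrow>
   Q (1 + ncost a) (s\<lparr>rmem := (rmem s)(nval a s := hd (inp s)), inp := tl (inp s),
     trace := trace s @ [ReadEv]\<rparr>) \<Longrightarrow> runs_to (Read a) s Q"
  unfolding runs_to_def using ReadB[of s "hd (inp s)" "tl (inp s)" a] by (cases "inp s") auto

lemma runs_to_Write:
  "Q (1 + rcost e) (s\<lparr>trace := trace s @ [OutEv (rval e s)]\<rparr>) \<Longrightarrow> runs_to (Write e) s Q"
  unfolding runs_to_def using WriteB by blast

lemma runs_to_Seq_exact:
  "runs_to c1 s (\<lambda>t s'. t \<le> K1 \<and> s' = s1) \<Longrightarrow> runs_to c2 s1 (\<lambda>t s'. t \<le> K2 \<and> P s') \<Longrightarrow>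
     runs_to (Seq c1 c2) s (\<lambda>t s'. t \<le> K1 + K2 \<and> P s')"
  unfolding runs_to_def using SeqB by fastforce

lemmas runs_to_rules =
  runs_to_Skip runs_to_NStore runs_to_RStore runs_to_Seq runs_to_If runs_to_Read runs_to_Write

text \<open>I k is the invariant after k iterations; as k < N whenever the guard holds, at most
  N - k further iterations run.\<close>

lemma runs_to_While:
  assumes step: "\<And>k s. I k s \<Longrightarrow> bval b s \<Longrightarrow>
    k < N \<and> runs_to c s (\<lambda>t s'. t \<le> K \<and> I (Suc k) s')"
  shows "I k s \<Longrightarrow> runs_to (While b c) s
     (\<lambda>t s'. (\<exists>k'. I k' s') \<and> \<not> bval b s' \<and> t \<le> (1 + bcost b + K) * (N - k) + 1 + bcost b)"
proof (induction "N - k" arbitrary: k s rule: less_induct)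
  case less
  show ?case
  proof (cases "bval b s")
    case False
    then show ?thesis
      unfolding runs_to_def using WhileFalseB less.prems by fastforce
  next
    case True
    obtain t1 s1 where b1: "big_step (c, s) t1 s1" and t1: "t1 \<le> K" and i1: "I (Suc k) s1"
      and kN: "k < N"
      using step[OF less.prems True] unfolding runs_to_def by blast
    obtain t2 s2 where b2: "big_step (While b c, s1) t2 s2" and i2: "\<exists>k'. I k' s2"
      and nb: "\<not> bval b s2" and t2: "t2 \<le> (1 + bcost b + K) * (N - Suc k) + 1 + bcost b"
      using less.hyps[of "Suc k", OF _ i1] kN unfolding runs_to_def by (meson diff_less_mono2 lessI)
    have "N - k = Suc (N - Suc k)"
      using kN by simp
    then have "(1 + bcost b + K) * (N - Suc k) + (1 + bcost b + K) = (1 + bcost b + K) * (N - k)"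
      by (simp only: mult_Suc_right add.commute)
    then have "1 + bcost b + t1 + t2 \<le> (1 + bcost b + K) * (N - k) + 1 + bcost b"
      using t1 t2 by linarith
    then show ?thesis
      unfolding runs_to_def using WhileTrueB[OF True b1 b2] i2 nb by blast
  qed
qed

section \<open>The implementation\<close>

text \<open>Natural cells: 0 the horizon n, 1 the round t,
  2 the bin start t_h, 3 the flag newBin, 4 the bin length m = t - t_h + 1, 5 the block length
  p = 2^q at the current level q. Real cells: 0, 1, 2 the parameters \<sigma>, \<delta>, \<beta>, 3 the
  threshold, 4 full_terms of the bin, 5 the sum of its boundary terms, 6 its average,
  7 the previous observation, and 8 + i the prefix sum psum of its first i observations.\<close>

abbreviation nv :: "nat \<Rightarrow> nexp" where "nv i \<equiv> NLd (NC i)"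
abbreviation rv :: "nat \<Rightarrow> rexp" where "rv i \<equiv> RLd (NC i)"
abbreviation prefix_sum :: "nexp \<Rightarrow> rexp" where "prefix_sum e \<equiv> RLd (NPlus (NC 8) e)"

definition add_thr_term :: "nat \<Rightarrow> rexp \<Rightarrow> com" where
  "add_thr_term cell D =
     (let excess = RMinus (RDivide (RAbs D) (RSqrt (ROfNat (nv 5)))) (rv 3) in
      If (BRLess (RC 0) excess)
        (RStore (NC cell) (RPlus (rv cell) (RDivide excess (RSqrt (ROfNat (nv 5))))))
        Skip)"

lemma add_thr_term_runs:
  "runs_to (add_thr_term cell D) s (\<lambda>t s'. t \<le> 40 + 2 * rcost D \<and>
     s' = s\<lparr>rmem := (rmem s)(cell := rmem s cell + thr_term (rmem s 3) (nmem s 5) (rval D s))\<rparr>)"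
  unfolding add_thr_term_def Let_def
  by (intro runs_to_rules) (auto simp: thr_term_def)

definition block_diff_expr :: "(nexp \<Rightarrow> rexp) \<Rightarrow> nexp \<Rightarrow> nexp \<Rightarrow> rexp" where
  "block_diff_expr F s p =
     RPlus (RMinus (F (NPlus s p)) (RTimes (RC 2) (F (NPlus s (NDiv p (NC 2)))))) (F s)"

lemma rcost_block_diff_expr [simp]:
  "rcost (block_diff_expr F s p)
     = 4 + rcost (F (NPlus s p)) + rcost (F (NPlus s (NDiv p (NC 2)))) + rcost (F s)"
  by (simp add: block_diff_expr_def)

lemma rval_block_diff_prefix_sum:
  "rval (block_diff_expr prefix_sum s p) st = block_diff (\<lambda>x. rmem st (8 + x)) (nval s st) (nval p st)"
  by (simp add: block_diff_expr_def block_diff_def)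

text \<open>Reading the centered prefix sums through min e m = e - (e - m) keeps every memory access
  inside the bin, where centered_psum vanishes from m on.\<close>

definition centered_expr :: "nexp \<Rightarrow> rexp" where
  "centered_expr e = (let i = NMinus e (NMinus e (nv 4)) in
     RMinus (prefix_sum i) (RTimes (rv 6) (ROfNat i)))"

lemma rcost_centered_expr [simp]: "rcost (centered_expr e) = 16 + 4 * ncost e"
  by (simp add: centered_expr_def Let_def)

lemma rval_block_diff_centered:
  assumes "nmem s 4 = m" "rmem s 6 = psum ys a m / m" "\<forall>i\<le>m. rmem s (8 + i) = psum ys a i"
  shows "rval (block_diff_expr centered_expr e p) s = block_diff (centered_psum ys a m) (nval e s) (nval p s)"
proof -
  have "rval (centered_expr e) s = centered_psum ys a m (nval e s)" for e
  proof (cases "nval e s \<le> m")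
    case False
    then show ?thesis
      using assms centered_psum_beyond[of m "nval e s"]
      by (cases "m = 0") (simp_all add: centered_expr_def Let_def centered_psum_def)
  qed (use assms in \<open>simp add: centered_expr_def Let_def centered_psum_def\<close>)
  then show ?thesis
    by (simp add: block_diff_expr_def block_diff_def)
qed

definition boundary_c :: com where
  "boundary_c = add_thr_term 5 (block_diff_expr centered_expr (NTimes (NDiv (nv 4) (nv 5)) (nv 5)) (nv 5))"

lemma boundary_c_runs:
  assumes "nmem s 4 = m" "nmem s 5 = 2^q" "rmem s 3 = lam" "rmem s 6 = psum ys a m / m"
    "\<forall>i\<le>m. rmem s (8 + i) = psum ys a i"
  shows "runs_to boundary_c s (\<lambda>t s'. t \<le> 500 \<and>
     s' = s\<lparr>rmem := (rmem s)(5 := rmem s 5 + boundary_term lam ys a m q)\<rparr>)"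
  unfolding boundary_c_def
  by (rule runs_to_mono[OF add_thr_term_runs])
    (simp add: assms boundary_term_def rval_block_diff_centered[OF assms(1,4,5)])

definition full_c :: com where
  "full_c = If (BNLess (NC 0) (NMod (nv 4) (nv 5))) Skip
     (add_thr_term 4 (block_diff_expr prefix_sum (NMinus (nv 4) (nv 5)) (nv 5)))"

lemma full_c_runs:
  assumes "nmem s 4 = m" "nmem s 5 = 2^q" "rmem s 3 = lam" "\<forall>i\<le>m. rmem s (8 + i) = psum ys a i"
    "0 < m"
  shows "runs_to full_c s (\<lambda>t s'. t \<le> 150 \<and> s' = s\<lparr>rmem := (rmem s)(4 := rmem s 4
     + (if 2^q dvd m then thr_term lam (2^q) (block_diff (psum ys a) (m - 2^q) (2^q)) else 0))\<rparr>)"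
proof -
  have "block_diff (\<lambda>x. rmem s (8 + x)) (m - 2^q) (2^q) = block_diff (psum ys a) (m - 2^q) (2^q)"
    if "2^q dvd m"
    using assms(4,5) dvd_imp_le[OF that] by (intro block_diff_cong) simp
  then show ?thesis
    unfolding full_c_def using assms(1-3)
    by (intro runs_to_rules runs_to_mono[OF add_thr_term_runs])
      (auto simp: rval_block_diff_prefix_sum dvd_eq_mod_eq_0)
qed

definition level_body :: com where
  "level_body = Seq boundary_c (Seq full_c (NStore (NC 5) (NTimes (nv 5) (NC 2))))"

definition level_loop :: com where
  "level_loop = While (BNLess (nv 5) (NTimes (NC 2) (nv 4))) level_body"

definition level_state :: "real \<Rightarrow> real list \<Rightarrow> nat \<Rightarrow> nat \<Rightarrow> state \<Rightarrow> nat \<Rightarrow> state" where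
  "level_state lam ys a m s q = s\<lparr>nmem := (nmem s)(5 := 2^q),
     rmem := (rmem s)(
       4 := rmem s 4 + (\<Sum>x\<in>{x\<in>{1..<q}. 2^x dvd m}.
              thr_term lam (2^x) (block_diff (psum ys a) (m - 2^x) (2^x))),
       5 := rmem s 5 + (\<Sum>x\<in>{1..<q}. boundary_term lam ys a m x))\<rparr>"

lemma level_body_runs:
  assumes "nmem s 4 = m" "rmem s 3 = lam" "rmem s 6 = psum ys a m / m"
    "\<forall>i\<le>m. rmem s (8 + i) = psum ys a i" "0 < m" "1 \<le> q"
  shows "runs_to level_body (level_state lam ys a m s q)
     (\<lambda>t s'. t \<le> 660 \<and> s' = level_state lam ys a m s (Suc q))"
proof -
  let ?s = "level_state lam ys a m s q"
  define s1 where "s1 = ?s\<lparr>rmem := (rmem ?s)(5 := rmem ?s 5 + boundary_term lam ys a m q)\<rparr>"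
  define s2 where "s2 = s1\<lparr>rmem := (rmem s1)(4 := rmem s1 4 + (if 2^q dvd m
     then thr_term lam (2^q) (block_diff (psum ys a) (m - 2^q) (2^q)) else 0))\<rparr>"
  have "runs_to boundary_c ?s (\<lambda>t s'. t \<le> 500 \<and> s' = s1)"
    unfolding s1_def using assms by (intro boundary_c_runs) (simp_all add: level_state_def)
  moreover have "runs_to full_c s1 (\<lambda>t s'. t \<le> 150 \<and> s' = s2)"
    unfolding s2_def using assms by (intro full_c_runs) (simp_all add: s1_def level_state_def)
  moreover have "runs_to (NStore (NC 5) (NTimes (nv 5) (NC 2))) s2
      (\<lambda>t s'. t \<le> 10 \<and> s' = level_state lam ys a m s (Suc q))"
    using assms(6) unfolding level_state_def[of _ _ _ _ _ "Suc q"]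
      sum_filter_atLeastLessThan_Suc[OF assms(6)] sum.atLeastLessThan_Suc[OF assms(6)]
    by (intro runs_to_rules) (simp add: s2_def s1_def level_state_def fun_upd_twist algebra_simps)
  ultimately have "runs_to level_body ?s
      (\<lambda>t s'. t \<le> 500 + (150 + 10) \<and> s' = level_state lam ys a m s (Suc q))"
    unfolding level_body_def by (intro runs_to_Seq_exact)
  then show ?thesis
    by simp
qed

lemma level_loop_runs:
  assumes "nmem s 4 = m" "nmem s 5 = 2" "rmem s 3 = lam" "rmem s 6 = psum ys a m / m"
    "\<forall>i\<le>m. rmem s (8 + i) = psum ys a i" "0 < m"
  shows "runs_to level_loop s
     (\<lambda>t s'. t \<le> 668 * nlev m + 8 \<and> s' = level_state lam ys a m s (nlev m + 1))"
proof -
  define I where "I q s' \<longleftrightarrow> 1 \<le> q \<and> q \<le> nlev m + 1 \<and> s' = level_state lam ys a m s q" for q s'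
  let ?b = "BNLess (nv 5) (NTimes (NC 2) (nv 4))"
  have "I 1 s"
    using assms(2) by (simp add: I_def level_state_def fun_upd_idem)
  have "runs_to level_loop s (\<lambda>t s'. (\<exists>q. I q s') \<and> \<not> bval ?b s'
      \<and> t \<le> (1 + bcost ?b + 660) * (nlev m + 1 - 1) + 1 + bcost ?b)"
    unfolding level_loop_def
  proof (rule runs_to_While[where N = "nlev m + 1" and I = I and K = 660, OF _ \<open>I 1 s\<close>])
    fix q s' assume "I q s'" "bval ?b s'"
    then have "q \<le> nlev m" "s' = level_state lam ys a m s q" "1 \<le> q"
      using two_power_less_double_iff[of q m] assms(1) by (auto simp: I_def level_state_def)
    then show "q < nlev m + 1 \<and> runs_to level_body s' (\<lambda>t s''. t \<le> 660 \<and> I (Suc q) s'')"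
      using level_body_runs[OF assms(1,3-6)] by (auto simp: I_def intro: runs_to_mono)
  qed
  then show ?thesis
  proof (rule runs_to_mono, elim conjE exE)
    fix t s' q assume "I q s'" "\<not> bval ?b s'" and t: "t \<le> (1 + bcost ?b + 660) * (nlev m + 1 - 1) + 1 + bcost ?b"
    then have "q = nlev m + 1" "s' = level_state lam ys a m s q"
      using two_power_less_double_iff[of q m] assms(1) by (auto simp: I_def level_state_def)
    then show "t \<le> 668 * nlev m + 8 \<and> s' = level_state lam ys a m s (nlev m + 1)"
      using t by simp
  qed
qed

definition predict_read_c :: com where
  "predict_read_c =
     Seq (If (BNLess (NC 0) (nv 3)) (Write (rv 7))
           (Write (RDivide (prefix_sum (NMinus (nv 1) (nv 2))) (ROfNat (NMinus (nv 1) (nv 2))))))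
    (Seq (NStore (NC 3) (NC 0))
    (Seq (Read (NC 7))
    (Seq (NStore (NC 4) (NPlus (NMinus (nv 1) (nv 2)) (NC 1)))
    (Seq (RStore (NPlus (NC 8) (nv 4)) (RPlus (prefix_sum (NMinus (nv 4) (NC 1))) (rv 7)))
    (Seq (RStore (NC 6) (RDivide (prefix_sum (nv 4)) (ROfNat (nv 4))))
    (Seq (RStore (NC 5) (RC 0))
         (NStore (NC 5) (NC 2))))))))"

definition predict_read_state :: "state \<Rightarrow> state" where
  "predict_read_state s = (let d = nmem s 1 - nmem s 2; y = hd (inp s); S = rmem s (8 + d) + y in
     s\<lparr>nmem := (nmem s)(3 := 0, 4 := d + 1, 5 := 2),
       rmem := (rmem s)(7 := y, 8 + (d + 1) := S, 6 := S / (d + 1), 5 := 0),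
       inp := tl (inp s),
       trace := trace s @ [OutEv (if 0 < nmem s 3 then rmem s 7 else rmem s (8 + d) / d), ReadEv]\<rparr>)"

lemma predict_read_runs:
  "inp s \<noteq> [] \<Longrightarrow> runs_to predict_read_c s (\<lambda>t s'. t \<le> 100 \<and> s' = predict_read_state s)"
  unfolding predict_read_c_def
  \<comment> \<open>simplifying after every instruction keeps the symbolic state small\<close>
  by (rule runs_to_Seq, rule runs_to_If;
      ((rule runs_to_rules, simp?)+, simp add: predict_read_state_def Let_def))

definition split_c :: com where
  "split_c =
     Seq (If (BRLess (RDivide (rv 0) (RSqrt (ROfNat (NDiv (nv 5) (NC 2))))) (RPlus (rv 4) (rv 5)))
           (Seq (NStore (NC 3) (NC 1)) (Seq (NStore (NC 2) (NPlus (nv 1) (NC 1))) (RStore (NC 4) (RC 0))))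
           Skip)
      (NStore (NC 1) (NPlus (nv 1) (NC 1)))"

definition split_state :: "state \<Rightarrow> state" where
  "split_state s = (if rmem s 0 / sqrt (nmem s 5 div 2) < rmem s 4 + rmem s 5
     then s\<lparr>nmem := (nmem s)(3 := 1, 2 := nmem s 1 + 1, 1 := nmem s 1 + 1), rmem := (rmem s)(4 := 0)\<rparr>
     else s\<lparr>nmem := (nmem s)(1 := nmem s 1 + 1)\<rparr>)"

lemma split_runs: "runs_to split_c s (\<lambda>t s'. t \<le> 100 \<and> s' = split_state s)"
  unfolding split_c_def
  by (intro runs_to_rules) (simp_all add: split_state_def)

definition outer_body :: com where
  "outer_body = Seq predict_read_c (Seq level_loop split_c)"

definition outer_inv :: "nat \<Rightarrow> real \<Rightarrow> real \<Rightarrow> real list \<Rightarrow> real \<Rightarrow> nat \<Rightarrow> state \<Rightarrow> bool" where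
  "outer_inv n \<sigma> \<beta> ys lam t s \<longleftrightarrow>
     1 \<le> t \<and> t \<le> n + 1 \<and> nmem s 0 = n \<and> nmem s 1 = t \<and>
     arrows_state n \<sigma> \<beta> ys (t - 1) = (nmem s 2, 0 < nmem s 3) \<and>
     rmem s 0 = \<sigma> \<and> rmem s 3 = lam \<and> rmem s 7 = obs ys (t - 1) \<and>
     rmem s 4 = full_terms lam ys (nmem s 2) (t - nmem s 2) \<and>
     (\<forall>i \<le> t - nmem s 2. rmem s (8 + i) = psum ys (nmem s 2) i) \<and>
     inp s = drop (t - 1) ys \<and>
     trace s = concat (map (\<lambda>t. [OutEv (arrows_pred n \<sigma> \<beta> ys t), ReadEv]) [1..<t])"

lemma arrows_state_bounds:
  "1 \<le> fst (arrows_state n \<sigma> \<beta> ys t) \<and> fst (arrows_state n \<sigma> \<beta> ys t) \<le> t + 1 \<and>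
   (snd (arrows_state n \<sigma> \<beta> ys t) \<longleftrightarrow> fst (arrows_state n \<sigma> \<beta> ys t) = t + 1)"
  by (induction t) (auto simp: Let_def)

lemma arrows_state_step:
  "1 \<le> t \<Longrightarrow> arrows_state n \<sigma> \<beta> ys (t - 1) = (a, b) \<Longrightarrow>
     arrows_state n \<sigma> \<beta> ys t = (if split_test n \<sigma> \<beta> ys a t then (Suc t, True) else (a, False))"
  by (cases t) (simp_all add: Let_def)

lemma outer_inv_bin_start:
  assumes "outer_inv n \<sigma> \<beta> ys lam t s" "nmem s 2 = a"
  shows "1 \<le> a" "a \<le> t" "0 < nmem s 3 \<longleftrightarrow> a = t"
  using assms arrows_state_bounds[of n \<sigma> \<beta> ys "t - 1"] by (auto simp: outer_inv_def)

lemma outer_inv_prediction: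
  assumes "outer_inv n \<sigma> \<beta> ys lam t s" "nmem s 2 = a"
  shows "(if 0 < nmem s 3 then rmem s 7 else rmem s (8 + (t - a)) / (t - a)) = arrows_pred n \<sigma> \<beta> ys t"
proof (cases "0 < nmem s 3")
  case False
  then have "a < t"
    using outer_inv_bin_start[OF assms] by simp
  then have "avg ys a (t - 1) = psum ys a (t - a) / (t - a)"
    by (simp add: avg_eq_psum Suc_diff_Suc)
  then show ?thesis
    using assms False by (simp add: outer_inv_def arrows_pred_def)
qed (use assms in \<open>simp add: outer_inv_def arrows_pred_def\<close>)

lemma predict_read_state_under_inv:
  assumes inv: "outer_inv n \<sigma> \<beta> ys lam t s" and "nmem s 2 = a" "t \<le> n" "length ys = n"
  shows "nmem (predict_read_state s) = (nmem s)(3 := 0, 4 := t - a + 1, 5 := 2)"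
    and "rmem (predict_read_state s) = (rmem s)(7 := obs ys t, 8 + (t - a + 1) := psum ys a (t - a + 1),
           6 := psum ys a (t - a + 1) / (t - a + 1), 5 := 0)"
    and "inp (predict_read_state s) = drop t ys"
    and "trace (predict_read_state s) = trace s @ [OutEv (arrows_pred n \<sigma> \<beta> ys t), ReadEv]"
proof -
  have t: "1 \<le> t" "a \<le> t" "nmem s 1 = t"
    using inv outer_inv_bin_start[OF inv assms(2)] by (auto simp: outer_inv_def)
  have inp: "inp s = drop (t - 1) ys"
    using inv by (simp add: outer_inv_def)
  then have y: "hd (inp s) = obs ys t" "tl (inp s) = drop t ys"
    using t assms(3,4) by (simp_all add: hd_drop_conv_nth obs_def drop_Suc[symmetric] tl_drop)
  obtain d where d: "t = a + d"
    using t(2) le_Suc_ex by blast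
  have pred: "(if 0 < nmem s 3 then rmem s 7 else rmem s (8 + d) / d) = arrows_pred n \<sigma> \<beta> ys t"
    using outer_inv_prediction[OF inv assms(2)] unfolding d by (cases "0 < nmem s 3") simp_all
  have "rmem s (8 + d) = psum ys a d"
    using inv assms(2) d by (simp add: outer_inv_def)
  then have "rmem s (8 + d) + obs ys t = psum ys a (d + 1)"
    using d by (simp add: psum_Suc)
  then show "nmem (predict_read_state s) = (nmem s)(3 := 0, 4 := t - a + 1, 5 := 2)"
    and "rmem (predict_read_state s) = (rmem s)(7 := obs ys t, 8 + (t - a + 1) := psum ys a (t - a + 1),
           6 := psum ys a (t - a + 1) / (t - a + 1), 5 := 0)"
    and "inp (predict_read_state s) = drop t ys"
    and "trace (predict_read_state s) = trace s @ [OutEv (arrows_pred n \<sigma> \<beta> ys t), ReadEv]"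
    using y t d assms(2) pred by (simp_all add: predict_read_state_def Let_def)
qed

lemma outer_inv_split_state:
  assumes inv: "outer_inv n \<sigma> \<beta> ys lam t s" and a: "nmem s 2 = a" and "t \<le> n" "length ys = n"
    and lam: "lam = \<sigma> * sqrt (\<beta> * ln (real n))" "0 \<le> lam"
  shows "outer_inv n \<sigma> \<beta> ys lam (Suc t)
     (split_state (level_state lam ys a (t - a + 1) (predict_read_state s) (nlev (t - a + 1) + 1)))"
proof -
  obtain d where d: "t = a + d"
    using outer_inv_bin_start(2)[OF inv a] le_Suc_ex by blast
  define L where "L = nlev (Suc d)"
  define s2 where "s2 = level_state lam ys a (Suc d) (predict_read_state s) (L + 1)"
  note s1 = predict_read_state_under_inv[OF inv a assms(3,4), unfolded d, simplified]
  have "1 \<le> t" "arrows_state n \<sigma> \<beta> ys (t - 1) = (a, 0 < nmem s 3)"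
    using inv a by (simp_all add: outer_inv_def)
  note state = arrows_state_step[OF this]
  have s: "nmem s 0 = n" "nmem s 1 = t" "rmem s 0 = \<sigma>" "rmem s 3 = lam" "rmem s 4 = full_terms lam ys a d"
      "\<forall>i\<le>d. rmem s (8 + i) = psum ys a i"
    using inv a d by (simp_all add: outer_inv_def)
  have s2: "nmem s2 0 = n" "nmem s2 1 = t" "nmem s2 2 = a" "nmem s2 3 = 0" "nmem s2 5 div 2 = 2^L"
      "rmem s2 0 = \<sigma>" "rmem s2 3 = lam" "rmem s2 7 = obs ys t" "rmem s2 4 = full_terms lam ys a (Suc d)"
      "rmem s2 5 = (\<Sum>q=1..L. boundary_term lam ys a (Suc d) q)"
      "\<forall>i\<le>Suc d. rmem s2 (8 + i) = psum ys a i" "inp s2 = drop t ys"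
      "trace s2 = concat (map (\<lambda>t. [OutEv (arrows_pred n \<sigma> \<beta> ys t), ReadEv]) [1..<Suc t])"
    using s s1 d full_terms_Suc_upto_nlev[of lam ys a d, folded L_def] a inv
    unfolding s2_def level_state_def
    by (auto simp: le_Suc_eq atLeastLessThanSuc_atLeastAtMost outer_inv_def)
  have test: "rmem s2 0 / sqrt (nmem s2 5 div 2) < rmem s2 4 + rmem s2 5 \<longleftrightarrow> split_test n \<sigma> \<beta> ys a t"
    using split_test_iff[of a t lam \<sigma> \<beta> n ys] lam s2 d unfolding L_def by simp
  have "t - a + 1 = Suc d"
    using d by simp
  then show ?thesis
  proof (cases "split_test n \<sigma> \<beta> ys a t")
    case True
    then show ?thesis
      using s2 s2(11)[rule_format, of 0] test state \<open>1 \<le> t\<close> assms(3) \<open>t - a + 1 = Suc d\<close>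
      unfolding outer_inv_def split_state_def s2_def L_def by simp
  next
    case False
    then show ?thesis
      using s2 test state \<open>1 \<le> t\<close> assms(3) d
      unfolding outer_inv_def split_state_def s2_def L_def by simp
  qed
qed

lemma outer_body_runs:
  assumes inv: "outer_inv n \<sigma> \<beta> ys lam t s" and "t \<le> n" "length ys = n"
    and lam: "lam = \<sigma> * sqrt (\<beta> * ln (real n))" "0 \<le> lam"
  shows "runs_to outer_body s (\<lambda>t' s'. t' \<le> 668 * nlev n + 208 \<and> outer_inv n \<sigma> \<beta> ys lam (Suc t) s')"
proof -
  define a where "a = nmem s 2"
  define m where "m = t - a + 1"
  define s1 where "s1 = predict_read_state s"
  define s2 where "s2 = level_state lam ys a m s1 (nlev m + 1)"
  note s1 = predict_read_state_under_inv[OF inv a_def[symmetric] assms(2,3), folded m_def s1_def]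
  have t: "1 \<le> t" "a \<le> t" "1 \<le> a" "inp s = drop (t - 1) ys" "rmem s 3 = lam" "\<forall>i\<le>t - a. rmem s (8 + i) = psum ys a i"
    using inv outer_inv_bin_start[OF inv a_def[symmetric]] by (auto simp: outer_inv_def a_def)
  have "runs_to predict_read_c s (\<lambda>t s'. t \<le> 100 \<and> s' = s1)"
    unfolding s1_def using t(1,4) assms(2,3) by (intro predict_read_runs) simp
  moreover have "runs_to level_loop s1 (\<lambda>t s'. t \<le> 668 * nlev m + 8 \<and> s' = s2)"
    unfolding s2_def using s1(1,2) t(5,6) by (intro level_loop_runs) (auto simp: m_def le_Suc_eq)
  moreover have "runs_to split_c s2 (\<lambda>k s'. k \<le> 100 \<and> outer_inv n \<sigma> \<beta> ys lam (Suc t) s')"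
    unfolding s2_def s1_def m_def
    by (rule runs_to_mono[OF split_runs]) (use outer_inv_split_state[OF inv a_def[symmetric] assms(2-5)] in simp)
  ultimately have "runs_to outer_body s
      (\<lambda>t' s'. t' \<le> 100 + (668 * nlev m + 8 + 100) \<and> outer_inv n \<sigma> \<beta> ys lam (Suc t) s')"
    unfolding outer_body_def by (intro runs_to_Seq_exact)
  moreover have "nlev m \<le> nlev n"
    using t(2,3) assms(2) by (intro nlev_mono) (simp add: m_def)
  ultimately show ?thesis
    by (elim runs_to_mono) simp
qed

definition init_c :: com where
  "init_c = Seq (RStore (NC 3) (RTimes (rv 0) (RSqrt (RTimes (rv 2) (RLn (ROfNat (nv 0)))))))
     (Seq (NStore (NC 1) (NC 1)) (Seq (NStore (NC 2) (NC 1)) (NStore (NC 3) (NC 1))))"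

definition arrows_prog :: com where
  "arrows_prog = Seq init_c (While (BNLess (nv 1) (NPlus (nv 0) (NC 1))) outer_body)"

lemma init_c_runs:
  "runs_to init_c s (\<lambda>t s'. t \<le> 40 \<and> s' = s\<lparr>rmem := (rmem s)(3 := rmem s 0 * sqrt (rmem s 2 * ln (nmem s 0))),
     nmem := (nmem s)(1 := 1, 2 := 1, 3 := 1)\<rparr>)"
  unfolding init_c_def by (intro runs_to_rules) simp

lemma arrows_prog_runs:
  assumes "2 \<le> n" "0 < \<sigma>" "24 < \<beta>" "length ys = n"
  shows "runs_to arrows_prog (init_state n \<sigma> \<delta> \<beta> ys)
     (\<lambda>t s'. t \<le> 40 + ((668 * nlev n + 216) * n + 8) \<and> trace s' = arrows_trace n \<sigma> \<beta> ys)"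
proof -
  define lam where "lam = \<sigma> * sqrt (\<beta> * ln (real n))"
  have lam: "0 \<le> lam"
    unfolding lam_def using assms(1-3) by simp
  let ?b = "BNLess (nv 1) (NPlus (nv 0) (NC 1))"
  let ?s = "init_state n \<sigma> \<delta> \<beta> ys"
  define s0 where "s0 = ?s\<lparr>rmem := (rmem ?s)(3 := rmem ?s 0 * sqrt (rmem ?s 2 * ln (nmem ?s 0))),
    nmem := (nmem ?s)(1 := 1, 2 := 1, 3 := 1)\<rparr>"
  have "runs_to init_c ?s (\<lambda>t s'. t \<le> 40 \<and> s' = s0)"
    unfolding s0_def by (rule init_c_runs)
  moreover have "runs_to (While ?b outer_body) s0 (\<lambda>t s'. t \<le> (668 * nlev n + 216) * n + 8
      \<and> trace s' = arrows_trace n \<sigma> \<beta> ys)"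
  proof -
    have inv0: "outer_inv n \<sigma> \<beta> ys lam 1 s0"
      unfolding outer_inv_def s0_def init_state_def lam_def by (simp add: obs_def)
    have "runs_to (While ?b outer_body) s0 (\<lambda>t s'. (\<exists>k. outer_inv n \<sigma> \<beta> ys lam k s') \<and> \<not> bval ?b s'
        \<and> t \<le> (1 + bcost ?b + (668 * nlev n + 208)) * (n + 1 - 1) + 1 + bcost ?b)"
    proof (rule runs_to_While[where I = "outer_inv n \<sigma> \<beta> ys lam" and N = "n + 1" and K = "668 * nlev n + 208", OF _ inv0])
      fix k s assume inv: "outer_inv n \<sigma> \<beta> ys lam k s" and "bval ?b s"
      then have "k < n + 1"
        by (simp add: outer_inv_def)
      then show "k < n + 1 \<and> runs_to outer_body s
          (\<lambda>t s'. t \<le> 668 * nlev n + 208 \<and> outer_inv n \<sigma> \<beta> ys lam (Suc k) s')"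
        using outer_body_runs[OF inv _ assms(4) lam_def lam] by simp
    qed
    then show ?thesis
      by (rule runs_to_mono) (auto simp: outer_inv_def arrows_trace_def algebra_simps)
  qed
  ultimately show ?thesis
    unfolding arrows_prog_def by (intro runs_to_Seq_exact)
qed

theorem proposition3:
  "\<exists>(prog :: com) (C :: real). \<forall>(n :: nat) (\<sigma> :: real) (\<delta> :: real) (\<beta> :: real) (ys :: real list).
     2 \<le> n \<and> 0 < \<sigma> \<and> 0 < \<delta> \<and> \<delta> \<le> 1 \<and> 24 < \<beta> \<and> length ys = n \<longrightarrow>
     (\<exists>tm s'. big_step (prog, init_state n \<sigma> \<delta> \<beta> ys) tm s'
        \<and> trace s' = arrows_trace n \<sigma> \<beta> ys
        \<and> real tm \<le> C * real n * ln (real n))"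
proof (intro exI[of _ arrows_prog] exI[of _ "1600 / ln 2"] allI impI)
  fix n :: nat and \<sigma> \<delta> \<beta> :: real and ys :: "real list"
  assume "2 \<le> n \<and> 0 < \<sigma> \<and> 0 < \<delta> \<and> \<delta> \<le> 1 \<and> 24 < \<beta> \<and> length ys = n"
  then obtain tm s' where "big_step (arrows_prog, init_state n \<sigma> \<delta> \<beta> ys) tm s'"
    "trace s' = arrows_trace n \<sigma> \<beta> ys" and tm: "tm \<le> 48 + (216 + 668 * nlev n) * n"
    using arrows_prog_runs[of n \<sigma> \<beta> ys \<delta>] unfolding runs_to_def by (auto simp: algebra_simps)
  moreover have "real tm \<le> 1600 / ln 2 * n * ln n"
  proof -
    have "real tm \<le> real (48 + (216 + 668 * nlev n) * n)"
      using tm by (simp only: of_nat_le_iff)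
    also have "\<dots> \<le> 1600 / ln 2 * n * ln n"
      using n_nlev_le_n_ln[of n 48 216 668] \<open>2 \<le> n \<and> _\<close> by simp
    finally show ?thesis .
  qed
  ultimately show "\<exists>tm s'. big_step (arrows_prog, init_state n \<sigma> \<delta> \<beta> ys) tm s'
      \<and> trace s' = arrows_trace n \<sigma> \<beta> ys \<and> real tm \<le> 1600 / ln 2 * n * ln n"
    by blast
qed

end
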